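(* Let $k\ge1$ and let $F$ be a finite family of wide $2$-way infinite $k$-monotone chains. For $A,B\in F$ say that $A$ is higher than $B$ if $B$ is contained in the upside of $A$. Then "higher" is a partial order on $F$, two members of $F$ are comparable if and only if they are disjoint, and consequently the disjointness graph of $F$ is a comparability graph (in particular $\chi=\omega$ for it).
   Context: A curve is $x$-monotone if every vertical line meets it in at most one point. A $2$-way infinite $k$-monotone chain is a (possibly self-intersecting) continuous curve in the plane that is the union of $k$ consecutive $x$-monotone pieces, consecutive pieces sharing an endpoint, with the first and last pieces having unbounded projections to the $x$-axis. Such a chain is wide if it intersects every vertical line. For a wide chain $A$, the upside of $A$ is the unique connected component of $\mathbb R^2\setminus A$ containing an upward vertical half-line. The disjointness graph of a family has the members as vertices, two adjacent if and only if they are disjoint. *)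

theory Defs
  imports "HOL-Analysis.Analysis"
begin

type_synonym point = "real \<times> real"

text \<open>Parameter domain of the i-th piece (i < k) of a chain parametrised by a
continuous map on the real line, with break points t 1 < ... < t (k-1).\<close>
definition piece_dom :: "nat \<Rightarrow> (nat \<Rightarrow> real) \<Rightarrow> nat \<Rightarrow> real set" where
  "piece_dom k t i = {s. (i = 0 \<or> t i \<le> s) \<and> (i = k - 1 \<or> s \<le> t (Suc i))}"

text \<open>A 2-way infinite k-monotone chain: the image of a continuous curve that is
the concatenation of k x-monotone pieces (the x-coordinate is injective along each
piece), consecutive pieces sharing the break point, the first and last pieces having
unbounded projection to the x-axis.\<close>
definition k_monotone_chain :: "nat \<Rightarrow> point set \<Rightarrow> bool" where
  "k_monotone_chain k A \<longleftrightarrow>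
     (\<exists>(\<gamma>::real \<Rightarrow> point) (t::nat \<Rightarrow> real).
        continuous_on UNIV \<gamma> \<and>
        (\<forall>i j. 1 \<le> i \<longrightarrow> i < j \<longrightarrow> j \<le> k - 1 \<longrightarrow> t i < t j) \<and>
        A = range \<gamma> \<and>
        (\<forall>i<k. inj_on (fst \<circ> \<gamma>) (piece_dom k t i)) \<and>
        \<not> bounded (fst ` \<gamma> ` piece_dom k t 0) \<and>
        \<not> bounded (fst ` \<gamma> ` piece_dom k t (k - 1)))"

definition wide :: "point set \<Rightarrow> bool" where
  "wide A \<longleftrightarrow> (\<forall>x. \<exists>p\<in>A. fst p = x)"

definition upward_halfline :: "real \<Rightarrow> real \<Rightarrow> point set" where
  "upward_halfline x y = {(x, y') | y'. y \<le> y'}"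

definition upside :: "point set \<Rightarrow> point set" where
  "upside A = (THE U. U \<in> components (- A) \<and> (\<exists>x y. upward_halfline x y \<subseteq> U))"

definition higher :: "point set \<Rightarrow> point set \<Rightarrow> bool" where
  "higher A B \<longleftrightarrow> B \<subseteq> upside A"

definition disj_edge :: "'a set set \<Rightarrow> 'a set \<Rightarrow> 'a set \<Rightarrow> bool" where
  "disj_edge F A B \<longleftrightarrow> A \<in> F \<and> B \<in> F \<and> A \<noteq> B \<and> A \<inter> B = {}"

definition comparability_graph :: "'a set \<Rightarrow> ('a \<Rightarrow> 'a \<Rightarrow> bool) \<Rightarrow> bool" where
  "comparability_graph V E \<longleftrightarrow>
     (\<exists>R. (\<forall>a\<in>V. \<not> R a a) \<and>
          (\<forall>a\<in>V. \<forall>b\<in>V. \<forall>c\<in>V. R a b \<and> R b c \<longrightarrow> R a c) \<and>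
          (\<forall>a\<in>V. \<forall>b\<in>V. a \<noteq> b \<longrightarrow> (E a b \<longleftrightarrow> R a b \<or> R b a)))"

definition chromatic_number :: "'a set \<Rightarrow> ('a \<Rightarrow> 'a \<Rightarrow> bool) \<Rightarrow> nat" where
  "chromatic_number V E = (LEAST n. \<exists>c::'a \<Rightarrow> nat. (\<forall>v\<in>V. c v < n) \<and>
        (\<forall>u\<in>V. \<forall>v\<in>V. E u v \<longrightarrow> c u \<noteq> c v))"

definition clique_number :: "'a set \<Rightarrow> ('a \<Rightarrow> 'a \<Rightarrow> bool) \<Rightarrow> nat" where
  "clique_number V E = Max {card C | C. C \<subseteq> V \<and> (\<forall>u\<in>C. \<forall>v\<in>C. u \<noteq> v \<longrightarrow> E u v)}"

end

theory Submission
  imports Defs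
begin

text \<open>A wide k-monotone chain is the image of a curve whose x-coordinate is continuous,
  surjective and injective near both ends, hence tends to \<open>+\<infinity>\<close> at one end and to \<open>-\<infinity>\<close>
  at the other. So the chain meets every vertical strip in a compact set and, far to the right,
  meets each vertical line in a single point. There a point directly above the chain is joined to
  infinity by a vertical ray avoiding it, so it lies in the upside; a point directly below does
  not, since a path from it to an upward ray inside the upside, closed up by two vertical rays,
  would cross a box that the chain traverses from left to right, and by the Fashoda theorem would
  meet the chain. Consequently, of two disjoint chains the one that is lower far to the right has
  the other in its upside, and "higher" is a strict partial order whose comparable pairs are the
  disjoint pairs. Colouring every chain by the size of the largest clique of which it is the
  highest member then uses exactly as many colours as the largest clique.\<close>

section \<open>Continuous real functions injective near both ends\<close>

lemma inj_on_reflect_atMost: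
  fixes f :: "real \<Rightarrow> 'a"
  shows "inj_on f {..a} \<Longrightarrow> inj_on (\<lambda>s. f (- s)) {- a..}"
  unfolding inj_on_def by (metis atLeast_iff atMost_iff minus_minus neg_le_iff_le)

lemma strict_mono_on_ray_bdd_above_or_tendsto:
  fixes f :: "real \<Rightarrow> real"
  assumes mono: "strict_mono_on {a..} f"
  shows "bdd_above (f ` {a..}) \<or> filterlim f at_top at_top"
proof (rule disjCI)
  assume not_tendsto: "\<not> filterlim f at_top at_top"
  show "bdd_above (f ` {a..})"
  proof (rule ccontr)
    assume "\<not> bdd_above (f ` {a..})"
    then have above: "\<exists>u\<ge>a. Z < f u" for Z
      using bdd_aboveI2[of "{a..}" f Z] by (force simp: not_le)
    have "eventually (\<lambda>s. Z \<le> f s) at_top" for Z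
    proof -
      obtain u where "a \<le> u" "Z < f u"
        using above by blast
      then have "\<forall>s\<ge>u. Z \<le> f s"
        using strict_mono_on_leD[OF mono] by (meson atLeast_iff order.trans less_imp_le)
      then show ?thesis
        unfolding eventually_at_top_linorder by blast
    qed
    then show False
      using not_tendsto by (simp add: filterlim_at_top)
  qed
qed

lemma continuous_inj_ray_cases:
  fixes f :: "real \<Rightarrow> real"
  assumes "continuous_on {a..} f" and "inj_on f {a..}"
  shows "bdd_below (f ` {a..}) \<and> (bdd_above (f ` {a..}) \<or> filterlim f at_top at_top)
       \<or> bdd_above (f ` {a..}) \<and> (bdd_below (f ` {a..}) \<or> filterlim f at_bot at_top)"
proof -
  have "strict_mono_on {a..} f \<or> strict_antimono_on {a..} f"
    using injective_eq_monotone_map[OF is_interval_ci assms(1)] assms(2) by blast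
  then show ?thesis
  proof
    assume mono: "strict_mono_on {a..} f"
    then have "bdd_below (f ` {a..})"
      by (intro bdd_belowI2[of _ "f a"] strict_mono_on_leD[OF mono]) auto
    then show ?thesis
      using strict_mono_on_ray_bdd_above_or_tendsto[OF mono] by blast
  next
    assume anti: "strict_antimono_on {a..} f"
    then have mono: "strict_mono_on {a..} (\<lambda>s. - f s)"
      by (auto simp: monotone_on_def)
    then have "bdd_above (f ` {a..})"
      by (intro bdd_aboveI2[of _ _ "f a"]) (use strict_mono_on_leD[OF mono] in force)
    then show ?thesis
      using strict_mono_on_ray_bdd_above_or_tendsto[OF mono]
      by (simp add: filterlim_uminus_at_bot bdd_above_uminus_image)
  qed
qed

lemma continuous_surj_injective_ends_tendsto:
  fixes f :: "real \<Rightarrow> real"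
  assumes cont: "continuous_on UNIV f" and surj: "surj f" and "a \<le> b"
    and inj_left: "inj_on f {..a}" and inj_right: "inj_on f {b..}"
  shows "filterlim f at_bot at_bot \<and> filterlim f at_top at_top
       \<or> filterlim f at_top at_bot \<and> filterlim f at_bot at_top"
proof -
  define g where "g = (\<lambda>s. f (- s))"
  have "continuous_on {-a..} g"
    unfolding g_def by (intro continuous_on_compose2[OF cont] continuous_intros) auto
  moreover have "inj_on g {-a..}"
    unfolding g_def by (rule inj_on_reflect_atMost[OF inj_left])
  moreover have "g ` {-a..} = f ` {..a}"
    unfolding g_def by (force simp: image_iff intro: bexI[of _ "- _"])
  moreover have "filterlim g F at_top \<longleftrightarrow> filterlim f F at_bot" for F
    by (simp add: g_def filterlim_at_bot_mirror)
  ultimately have left: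
      "bdd_below (f ` {..a}) \<and> (bdd_above (f ` {..a}) \<or> filterlim f at_top at_bot)
     \<or> bdd_above (f ` {..a}) \<and> (bdd_below (f ` {..a}) \<or> filterlim f at_bot at_bot)"
    using continuous_inj_ray_cases[of "-a" g] by simp
  have right:
      "bdd_below (f ` {b..}) \<and> (bdd_above (f ` {b..}) \<or> filterlim f at_top at_top)
     \<or> bdd_above (f ` {b..}) \<and> (bdd_below (f ` {b..}) \<or> filterlim f at_bot at_top)"
    using continuous_inj_ray_cases[OF continuous_on_subset[OF cont] inj_right] by simp
  have "UNIV = f ` {..a} \<union> f ` {a..b} \<union> f ` {b..}"
    using surj \<open>a \<le> b\<close> by (force simp: image_iff)
  moreover have "bounded (f ` {a..b})"
    by (intro compact_imp_bounded compact_continuous_image continuous_on_subset[OF cont]) auto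
  moreover have "\<not> bdd_above (UNIV :: real set)" "\<not> bdd_below (UNIV :: real set)"
    by (auto simp: bdd_above_def bdd_below_def) (meson gt_ex not_le lt_ex)+
  ultimately have "\<not> (bdd_above (f ` {..a}) \<and> bdd_above (f ` {b..}))"
    and "\<not> (bdd_below (f ` {..a}) \<and> bdd_below (f ` {b..}))"
    by (metis bdd_above_Un bounded_imp_bdd_above bdd_below_Un bounded_imp_bdd_below)+
  then show ?thesis
    using left right by argo
qed

lemma compact_abs_sublevel_if_tendsto_infinity:
  fixes f :: "real \<Rightarrow> real"
  assumes cont: "continuous_on UNIV f"
    and top: "filterlim f at_infinity at_top" and bot: "filterlim f at_infinity at_bot"
  shows "compact {s. \<bar>f s\<bar> \<le> c}"
proof -
  have "eventually (\<lambda>s. c + 1 \<le> \<bar>f s\<bar>) at_top" "eventually (\<lambda>s. c + 1 \<le> \<bar>f s\<bar>) at_bot"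
    using top bot by (simp_all add: filterlim_at_infinity_conv_norm_at_top filterlim_at_top)
  then obtain N1 N2 where N1: "\<forall>s\<ge>N1. c + 1 \<le> \<bar>f s\<bar>" and N2: "\<forall>s\<le>N2. c + 1 \<le> \<bar>f s\<bar>"
    unfolding eventually_at_top_linorder eventually_at_bot_linorder by blast
  have "s \<in> {N2..N1}" if "\<bar>f s\<bar> \<le> c" for s
    using N1[rule_format, of s] N2[rule_format, of s] that by fastforce
  then have "{s. \<bar>f s\<bar> \<le> c} \<subseteq> {N2..N1}"
    by blast
  moreover have "closed {s. \<bar>f s\<bar> \<le> c}"
    by (intro closed_Collect_le continuous_intros cont)
  ultimately show ?thesis
    by (meson bounded_closed_interval bounded_subset compact_eq_bounded_closed)
qed

lemma eventually_injective_if_tendsto_at_bot: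
  fixes f :: "real \<Rightarrow> real"
  assumes cont: "continuous_on UNIV f" and bot: "filterlim f at_bot at_bot"
    and inj: "inj_on f {b..}"
  shows "\<exists>M. \<forall>s s'. M \<le> f s \<longrightarrow> f s' = f s \<longrightarrow> s' = s"
proof -
  obtain N where N: "\<forall>s\<le>N. f s \<le> 0"
    using bot by (auto simp: filterlim_at_bot eventually_at_bot_linorder)
  have "bounded (f ` {min N b..b})"
    by (intro compact_imp_bounded compact_continuous_image continuous_on_subset[OF cont]) auto
  then obtain X where X: "\<forall>s\<in>{min N b..b}. \<bar>f s\<bar> \<le> X"
    by (auto simp: bounded_iff)
  have right: "b < s" if "max X 0 + 1 \<le> f s" for s
  proof (rule ccontr)
    assume "\<not> b < s"
    then have "s \<le> N \<or> s \<in> {min N b..b}" by auto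
    then have "f s \<le> max X 0"
      using N X by (force simp: abs_le_iff)
    then show False
      using that by simp
  qed
  show ?thesis
  proof (intro exI[of _ "max X 0 + 1"] allI impI)
    fix s s' assume "max X 0 + 1 \<le> f s" "f s' = f s"
    then show "s' = s"
      using inj right[of s] right[of s'] by (auto simp: inj_on_def)
  qed
qed

lemma continuous_surj_injective_ends_eventually_injective:
  fixes f :: "real \<Rightarrow> real"
  assumes cont: "continuous_on UNIV f" and surj: "surj f" and "a \<le> b"
    and inj_left: "inj_on f {..a}" and inj_right: "inj_on f {b..}"
  shows "\<exists>M. \<forall>s s'. M \<le> f s \<longrightarrow> f s' = f s \<longrightarrow> s' = s"
  using continuous_surj_injective_ends_tendsto[OF assms]
proof
  assume "filterlim f at_bot at_bot \<and> filterlim f at_top at_top"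
  then show ?thesis
    using eventually_injective_if_tendsto_at_bot[OF cont _ inj_right] by blast
next
  assume "filterlim f at_top at_bot \<and> filterlim f at_bot at_top"
  then have "filterlim (\<lambda>s. f (- s)) at_bot at_bot"
    by (simp add: filterlim_at_top_mirror)
  moreover have "inj_on (\<lambda>s. f (- s)) {-a..}"
    by (rule inj_on_reflect_atMost[OF inj_left])
  moreover have "continuous_on UNIV (\<lambda>s. f (- s))"
    by (intro continuous_on_compose2[OF cont] continuous_intros) auto
  ultimately obtain M where M: "\<forall>s s'. M \<le> f (- s) \<longrightarrow> f (- s') = f (- s) \<longrightarrow> s' = s"
    using eventually_injective_if_tendsto_at_bot[of "\<lambda>s. f (- s)"] by blast
  have "s' = s" if "M \<le> f s" "f s' = f s" for s s'
    using M[rule_format, of "- s" "- s'"] that by simp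
  then show ?thesis by blast
qed

section \<open>Wide monotone chains are tame curves\<close>

lemma k_monotone_chain_injective_ends:
  assumes "k \<ge> 1" and "k_monotone_chain k A"
  obtains \<gamma> :: "real \<Rightarrow> point" and a b
  where "continuous_on UNIV \<gamma>" "A = range \<gamma>" "a \<le> b"
    "inj_on (fst \<circ> \<gamma>) {..a}" "inj_on (fst \<circ> \<gamma>) {b..}"
proof -
  obtain \<gamma> :: "real \<Rightarrow> point" and t where cont: "continuous_on UNIV \<gamma>"
    and t: "\<forall>i j. 1 \<le> i \<longrightarrow> i < j \<longrightarrow> j \<le> k - 1 \<longrightarrow> t i < t j"
    and A: "A = range \<gamma>" and inj: "\<forall>i<k. inj_on (fst \<circ> \<gamma>) (piece_dom k t i)"
    using assms(2) unfolding k_monotone_chain_def by blast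
  show ?thesis
  proof (cases "k = 1")
    case True
    then have "piece_dom k t 0 = UNIV"
      by (simp add: piece_dom_def)
    then have "inj_on (fst \<circ> \<gamma>) UNIV"
      using inj True by fastforce
    then show ?thesis
      using that[OF cont A order.refl] by (meson inj_on_subset subset_UNIV)
  next
    case False
    then have "k = 2 \<or> 1 < k - 1"
      using assms(1) by arith
    then have "t 1 \<le> t (k - 1)"
      using t[rule_format, of 1 "k - 1"] by auto
    moreover have "piece_dom k t 0 = {..t 1}" "piece_dom k t (k - 1) = {t (k - 1)..}"
      using False assms(1) by (auto simp: piece_dom_def)
    moreover have "inj_on (fst \<circ> \<gamma>) (piece_dom k t 0)" "inj_on (fst \<circ> \<gamma>) (piece_dom k t (k - 1))"
      using inj assms(1) by simp_all
    ultimately show ?thesis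
      using that[OF cont A] by simp
  qed
qed

definition tame_curve :: "point set \<Rightarrow> bool" where
  "tame_curve B \<longleftrightarrow> path_connected B \<and> wide B \<and> (\<forall>c. compact (B \<inter> {p. \<bar>fst p\<bar> \<le> c})) \<and>
     (\<exists>M. \<forall>p\<in>B. \<forall>q\<in>B. fst p = fst q \<longrightarrow> M \<le> fst p \<longrightarrow> p = q)"

lemma tame_curve_if_wide_chain:
  assumes "k \<ge> 1" and "k_monotone_chain k A" and "wide A"
  shows "tame_curve A"
proof -
  obtain \<gamma> :: "real \<Rightarrow> point" and a b where cont: "continuous_on UNIV \<gamma>" and A: "A = range \<gamma>"
    and ends: "a \<le> b" "inj_on (fst \<circ> \<gamma>) {..a}" "inj_on (fst \<circ> \<gamma>) {b..}"
    using k_monotone_chain_injective_ends[OF assms(1,2)] by blast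
  define f where "f = fst \<circ> \<gamma>"
  have cont_f: "continuous_on UNIV f"
    unfolding f_def by (intro continuous_on_compose cont continuous_on_fst continuous_on_id)
  have "surj f"
    using \<open>wide A\<close> unfolding A wide_def f_def surj_def by (metis comp_apply rangeE)
  note ends_f = cont_f this ends[folded f_def]
  have "filterlim f at_infinity at_top" "filterlim f at_infinity at_bot"
    using continuous_surj_injective_ends_tendsto[OF ends_f]
      filterlim_at_top_imp_at_infinity filterlim_mono[OF _ at_bot_le_at_infinity order_refl]
    by blast+
  then have "compact (\<gamma> ` {s. \<bar>f s\<bar> \<le> c})" for c
    using compact_abs_sublevel_if_tendsto_infinity[OF cont_f]
    by (intro compact_continuous_image continuous_on_subset[OF cont]) auto
  moreover have "\<gamma> ` {s. \<bar>f s\<bar> \<le> c} = A \<inter> {p. \<bar>fst p\<bar> \<le> c}" for c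
    unfolding A f_def by auto
  moreover obtain M where "\<forall>s s'. M \<le> f s \<longrightarrow> f s' = f s \<longrightarrow> s' = s"
    using continuous_surj_injective_ends_eventually_injective[OF ends_f] by blast
  then have "\<forall>p\<in>A. \<forall>q\<in>A. fst p = fst q \<longrightarrow> M \<le> fst p \<longrightarrow> p = q"
    unfolding A f_def by auto
  moreover have "path_connected A"
    unfolding A by (intro path_connected_continuous_image[OF cont path_connected_UNIV])
  ultimately show ?thesis
    using \<open>wide A\<close> unfolding tame_curve_def by auto
qed

section \<open>The upside of a tame curve\<close>

lemma tame_curve_closed:
  assumes "tame_curve B"
  shows "closed B"
proof -
  have "z \<in> B" if "z \<in> closure B" for z
  proof -
    define S where "S = {p :: point. \<bar>fst p\<bar> < \<bar>fst z\<bar> + 1}"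
    have "open S"
      unfolding S_def by (intro open_Collect_less continuous_intros)
    then have "z \<in> closure (S \<inter> B)"
      using that open_Int_closure_subset[of S B] by (auto simp: S_def)
    moreover have "S \<inter> B \<subseteq> B \<inter> {p. \<bar>fst p\<bar> \<le> \<bar>fst z\<bar> + 1}"
      unfolding S_def by auto
    moreover have "closed (B \<inter> {p. \<bar>fst p\<bar> \<le> \<bar>fst z\<bar> + 1})"
      using assms compact_imp_closed unfolding tame_curve_def by blast
    ultimately show "z \<in> B"
      using closure_minimal by blast
  qed
  then show ?thesis
    using closure_subset_eq by blast
qed

lemma tame_curve_strip_bounded:
  assumes "tame_curve B"
  obtains R where "\<forall>p\<in>B. \<bar>fst p\<bar> \<le> c \<longrightarrow> \<bar>snd p\<bar> \<le> R"
proof -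
  have "bounded (B \<inter> {p. \<bar>fst p\<bar> \<le> c})"
    using assms compact_imp_bounded unfolding tame_curve_def by blast
  then obtain R where R: "\<forall>p\<in>B \<inter> {p. \<bar>fst p\<bar> \<le> c}. norm p \<le> R"
    by (auto simp: bounded_iff)
  then have "\<forall>p\<in>B. \<bar>fst p\<bar> \<le> c \<longrightarrow> \<bar>snd p\<bar> \<le> R"
  proof (intro ballI impI)
    fix p assume "p \<in> B" "\<bar>fst p\<bar> \<le> c"
    then have "norm p \<le> R"
      using R by blast
    then show "\<bar>snd p\<bar> \<le> R"
      using norm_snd_le[of "snd p" "fst p"] by simp
  qed
  then show ?thesis ..
qed

lemma upward_halfline_eq: "upward_halfline x y = {x} \<times> {y..}"
  unfolding upward_halfline_def by auto

lemma connected_upward_halfline: "connected (upward_halfline x y)"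
  unfolding upward_halfline_eq by (intro convex_connected convex_Times convex_singleton convex_real_interval)

lemma components_upward_halfline_unique:
  assumes "tame_curve B"
    and U: "U \<in> components (- B)" "upward_halfline x y \<subseteq> U"
    and U': "U' \<in> components (- B)" "upward_halfline x' y' \<subseteq> U'"
  shows "U = U'"
proof -
  obtain R where R: "\<forall>p\<in>B. \<bar>fst p\<bar> \<le> max \<bar>x\<bar> \<bar>x'\<bar> \<longrightarrow> \<bar>snd p\<bar> \<le> R"
    using tame_curve_strip_bounded[OF assms(1)] by blast
  define Y where "Y = max (R + 1) (max y y')"
  define T where "T = {min x x'..max x x'} \<times> {Y..}"
  have "connected T"
    unfolding T_def by (intro convex_connected convex_Times convex_real_interval)
  moreover have "T \<subseteq> - B"
  proof
    fix p assume "p \<in> T"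
    then have "\<bar>fst p\<bar> \<le> max \<bar>x\<bar> \<bar>x'\<bar>" "R < snd p"
      unfolding T_def Y_def by auto
    then show "p \<in> - B"
      using R by force
  qed
  moreover have "(x, Y) \<in> T \<inter> U" "(x', Y) \<in> T \<inter> U'"
    using U(2) U'(2) unfolding T_def Y_def upward_halfline_eq by auto
  ultimately have "T \<subseteq> U" "T \<subseteq> U'"
    using components_maximal[OF U(1)] components_maximal[OF U'(1)] by blast+
  moreover have "T \<noteq> {}"
    using \<open>(x, Y) \<in> T \<inter> U\<close> by blast
  ultimately show ?thesis
    using components_eq[OF U(1) U'(1)] by blast
qed

lemma upside_eqI:
  assumes "tame_curve B" and "U \<in> components (- B)" and "upward_halfline x y \<subseteq> U"
  shows "upside B = U"
  unfolding upside_def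
proof (rule the_equality)
  show "U \<in> components (- B) \<and> (\<exists>x y. upward_halfline x y \<subseteq> U)"
    using assms by blast
  show "V = U" if "V \<in> components (- B) \<and> (\<exists>x y. upward_halfline x y \<subseteq> V)" for V
    using that components_upward_halfline_unique[OF assms(1) _ _ assms(2,3)] by blast
qed

lemma upside_in_components:
  assumes "tame_curve B"
  shows "upside B \<in> components (- B)" and "\<exists>x y. upward_halfline x y \<subseteq> upside B"
proof -
  obtain R where R: "\<forall>p\<in>B. \<bar>fst p\<bar> \<le> 0 \<longrightarrow> \<bar>snd p\<bar> \<le> R"
    using tame_curve_strip_bounded[OF assms] by blast
  have "upward_halfline 0 (R + 1) \<subseteq> - B"
  proof
    fix p assume "p \<in> upward_halfline 0 (R + 1)"
    then show "p \<in> - B"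
      using R unfolding upward_halfline_eq by force
  qed
  moreover have "upward_halfline 0 (R + 1) \<noteq> {}"
    unfolding upward_halfline_eq by auto
  ultimately obtain U where "U \<in> components (- B)" "upward_halfline 0 (R + 1) \<subseteq> U"
    using exists_component_superset[OF _ _ connected_upward_halfline] by blast
  then show "upside B \<in> components (- B)" "\<exists>x y. upward_halfline x y \<subseteq> upside B"
    using upside_eqI[OF assms] by auto
qed

lemma upside_subset: "tame_curve B \<Longrightarrow> upside B \<subseteq> - B"
  using upside_in_components(1) in_components_subset by blast

lemma open_upside: "tame_curve B \<Longrightarrow> open (upside B)"
  using open_components[OF _ upside_in_components(1)] tame_curve_closed by blast

lemma point_above_in_upside:
  assumes "tame_curve B" and "p \<in> B" and only_p: "\<forall>r\<in>B. fst r = fst p \<longrightarrow> r = p"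
    and "fst q = fst p" and "snd p < snd q"
  shows "q \<in> upside B"
proof -
  have "upward_halfline (fst q) (snd q) \<subseteq> - B"
  proof
    fix r assume r: "r \<in> upward_halfline (fst q) (snd q)"
    then have "r \<noteq> p"
      using assms(5) by (auto simp: upward_halfline_eq)
    then show "r \<in> - B"
      using r only_p assms(4) by (auto simp: upward_halfline_eq)
  qed
  moreover have "q \<in> upward_halfline (fst q) (snd q)"
    unfolding upward_halfline_eq by (simp add: mem_Times_iff)
  ultimately obtain U where "U \<in> components (- B)" "upward_halfline (fst q) (snd q) \<subseteq> U"
    using exists_component_superset[OF _ _ connected_upward_halfline] by blast
  then show ?thesis
    using upside_eqI[OF assms(1)] \<open>q \<in> upward_halfline _ _\<close> by blast
qed

lemma fashoda_pair:
  fixes f g :: "real \<Rightarrow> real \<times> real"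
  assumes "path f" "path g"
    and "path_image f \<subseteq> {a1..b1} \<times> {a2..b2}" "path_image g \<subseteq> {a1..b1} \<times> {a2..b2}"
    and "fst (pathstart f) = a1" "fst (pathfinish f) = b1"
    and "snd (pathstart g) = a2" "snd (pathfinish g) = b2"
  shows "path_image f \<inter> path_image g \<noteq> {}"
proof -
  define v :: "real \<times> real \<Rightarrow> real^2" where "v p = (\<chi> i. if i = 1 then fst p else snd p)" for p
  have v_nth [simp]: "v p $ 1 = fst p" "v p $ 2 = snd p" for p
    by (simp_all add: v_def)
  have "inj v"
    by (intro injI) (metis v_nth prod_eq_iff)
  have "continuous_on UNIV v"
    unfolding v_def
  proof (intro continuous_on_vec_lambda)
    show "continuous_on UNIV (\<lambda>p. if i = 1 then fst p else snd p :: real)" for i :: 2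
      by (cases "i = 1") (simp_all add: continuous_on_fst continuous_on_snd)
  qed
  then have "path (v \<circ> f)" "path (v \<circ> g)"
    using assms(1,2) by (auto intro: continuous_on_compose2 simp: path_def)
  moreover have "v ` ({a1..b1} \<times> {a2..b2}) \<subseteq> cbox (v (a1, a2)) (v (b1, b2))"
    by (auto simp: mem_box_cart forall_2)
  then have "path_image (v \<circ> f) \<subseteq> cbox (v (a1, a2)) (v (b1, b2))"
    "path_image (v \<circ> g) \<subseteq> cbox (v (a1, a2)) (v (b1, b2))"
    using assms(3,4) by (auto simp: path_image_compose)
  ultimately obtain z where "z \<in> path_image (v \<circ> f)" "z \<in> path_image (v \<circ> g)"
    by (rule fashoda) (use assms(5-8) in \<open>simp_all add: pathstart_compose pathfinish_compose\<close>)
  then show ?thesis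
    using \<open>inj v\<close> by (auto simp: path_image_compose inj_eq)
qed

lemma path_image_vertical_linepath:
  fixes a b :: real
  shows "a \<le> b \<Longrightarrow> path_image (linepath (x, a) (x, b)) \<subseteq> {x} \<times> {a..b}"
  using closed_segment_eq_real_ivl[of a b]
  by (auto simp: path_image_linepath dest!: closed_segment_PairD)

definition clamp_to_box :: "real \<Rightarrow> real \<Rightarrow> point \<Rightarrow> point" where
  "clamp_to_box X Y p = (max (- X) (min X (fst p)), max (- Y) (min Y (snd p)))"

lemma continuous_on_clamp_to_box: "continuous_on S (clamp_to_box X Y)"
  unfolding clamp_to_box_def by (intro continuous_intros)

lemma clamp_to_box_in_box: "0 \<le> X \<Longrightarrow> 0 \<le> Y \<Longrightarrow> clamp_to_box X Y p \<in> {-X..X} \<times> {-Y..Y}"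
  by (simp add: clamp_to_box_def)

lemma abs_fst_less_if_clamp_to_box: "\<bar>fst (clamp_to_box X Y p)\<bar> < X \<Longrightarrow> \<bar>fst p\<bar> < X"
  unfolding clamp_to_box_def by (simp add: abs_less_iff max_def min_def split: if_splits)

lemma clamp_to_box_eq_self: "\<bar>fst p\<bar> \<le> X \<Longrightarrow> \<bar>snd p\<bar> \<le> Y \<Longrightarrow> clamp_to_box X Y p = p"
  unfolding clamp_to_box_def by (simp add: abs_le_iff)

lemma path_meets_crossing_curve:
  fixes h :: "real \<Rightarrow> point"
  assumes "path_connected B" and "b1 \<in> B" "fst b1 = - X" and "b2 \<in> B" "fst b2 = X"
    and B_box: "\<forall>p\<in>B. \<bar>fst p\<bar> \<le> X \<longrightarrow> \<bar>snd p\<bar> \<le> Y"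
    and "path h" and h_box: "\<forall>z\<in>path_image h. \<bar>fst z\<bar> < X \<and> \<bar>snd z\<bar> \<le> Y"
    and "snd (pathstart h) = - Y" and "snd (pathfinish h) = Y"
  shows "path_image h \<inter> B \<noteq> {}"
proof -
  obtain g where g: "path g" "path_image g \<subseteq> B" "pathstart g = b1" "pathfinish g = b2"
    using assms(1-5) unfolding path_connected_def by blast
  have "\<bar>fst (pathstart h)\<bar> < X" "\<bar>snd (pathstart h)\<bar> \<le> Y"
    using h_box pathstart_in_path_image[of h] by blast+
  then have "0 < X" "0 \<le> Y"
    by linarith+
  \<comment> \<open>Clamping fixes the points of \<open>B\<close> in the box, so a crossing of the clamped path with \<open>h\<close>,
     which stays off the vertical sides, is a point of \<open>B\<close>.\<close>
  let ?g = "clamp_to_box X Y \<circ> g"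
  have "path ?g"
    using path_continuous_image[OF g(1) continuous_on_clamp_to_box] .
  moreover have "path_image ?g \<subseteq> {-X..X} \<times> {-Y..Y}"
    unfolding path_image_compose using \<open>0 < X\<close> \<open>0 \<le> Y\<close>
    by (intro image_subsetI clamp_to_box_in_box) simp_all
  moreover have "path_image h \<subseteq> {-X..X} \<times> {-Y..Y}"
    using h_box by (force simp: mem_Times_iff abs_le_iff abs_less_iff)
  moreover have "fst (pathstart ?g) = - X" "fst (pathfinish ?g) = X"
    using \<open>0 < X\<close> assms(3,5) g(3,4) by (simp_all add: pathstart_compose pathfinish_compose clamp_to_box_def)
  ultimately have "path_image ?g \<inter> path_image h \<noteq> {}"
    using fashoda_pair[OF _ \<open>path h\<close>] assms(9,10) by blast
  then obtain w where "w \<in> B" and z: "clamp_to_box X Y w \<in> path_image h"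
    using g(2) unfolding path_image_compose by blast
  then have "\<bar>fst w\<bar> < X"
    using h_box abs_fst_less_if_clamp_to_box by blast
  then have "clamp_to_box X Y w = w"
    using B_box \<open>w \<in> B\<close> by (simp add: clamp_to_box_eq_self)
  then show ?thesis
    using z \<open>w \<in> B\<close> by auto
qed

lemma upside_path_to_halfline:
  assumes "tame_curve B" and "q \<in> upside B"
  obtains g x0 y0 where "path g" "path_image g \<subseteq> upside B" "pathstart g = q"
    "pathfinish g = (x0, y0)" "upward_halfline x0 y0 \<subseteq> upside B"
proof -
  obtain x0 y0 where up: "upward_halfline x0 y0 \<subseteq> upside B"
    using upside_in_components(2)[OF assms(1)] by blast
  then have "(x0, y0) \<in> upside B"
    by (auto simp: upward_halfline_eq)
  moreover have "path_connected (upside B)"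
    using connected_open_path_connected open_upside[OF assms(1)]
      in_components_connected[OF upside_in_components(1)[OF assms(1)]] by blast
  ultimately show ?thesis
    using that up assms(2) unfolding path_connected_def by blast
qed

lemma path_image_coordinates_bounded:
  fixes g :: "real \<Rightarrow> real \<times> real"
  assumes "path g"
  obtains K where "\<forall>z\<in>path_image g. \<bar>fst z\<bar> \<le> K \<and> \<bar>snd z\<bar> \<le> K"
proof -
  obtain K where K: "\<forall>z\<in>path_image g. norm z \<le> K"
    using compact_imp_bounded[OF compact_path_image[OF assms]] by (auto simp: bounded_iff)
  have "\<bar>fst z\<bar> \<le> K \<and> \<bar>snd z\<bar> \<le> K" if "z \<in> path_image g" for z
  proof -
    have "\<bar>fst z\<bar> \<le> norm z" "\<bar>snd z\<bar> \<le> norm z"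
      using norm_fst_le[of "fst z" "snd z"] norm_snd_le[of "snd z" "fst z"] by simp_all
    then show ?thesis
      using K that by fastforce
  qed
  then show ?thesis
    using that by blast
qed

lemma vertically_extended_path_avoids:
  assumes tame: "tame_curve B" and "p \<in> B" and only_p: "\<forall>r\<in>B. fst r = fst p \<longrightarrow> r = p"
    and "fst q = fst p" and "snd q < snd p"
    and g: "path g" "path_image g \<subseteq> upside B" "pathstart g = q" "pathfinish g = (x0, y0)"
    and up: "upward_halfline x0 y0 \<subseteq> upside B"
    and "- Y \<le> snd q" and "y0 \<le> Y"
  defines "h \<equiv> linepath (fst q, - Y) q +++ g +++ linepath (x0, y0) (x0, Y)"
  shows "path h" and "path_image h \<inter> B = {}"
    and "path_image h \<subseteq> {fst q} \<times> {- Y..snd q} \<union> path_image g \<union> {x0} \<times> {y0..Y}"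
proof -
  show "path h"
    unfolding h_def using g by (intro path_join_imp) auto
  have below: "path_image (linepath (fst q, - Y) q) \<subseteq> {fst q} \<times> {- Y..snd q}"
    using path_image_vertical_linepath[of "- Y" "snd q" "fst q"] \<open>- Y \<le> snd q\<close> by simp
  have above: "path_image (linepath (x0, y0) (x0, Y)) \<subseteq> {x0} \<times> {y0..Y}"
    using path_image_vertical_linepath[of y0 Y x0] \<open>y0 \<le> Y\<close> by simp
  have "path_image h \<subseteq> path_image (linepath (fst q, - Y) q) \<union> path_image g
      \<union> path_image (linepath (x0, y0) (x0, Y))"
    unfolding h_def using path_image_join_subset[of g] path_image_join_subset[of "linepath _ _"] by blast
  then show parts: "path_image h \<subseteq> {fst q} \<times> {- Y..snd q} \<union> path_image g \<union> {x0} \<times> {y0..Y}"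
    using below above by blast
  have "({fst q} \<times> {- Y..snd q}) \<inter> B = {}"
    using only_p \<open>fst q = fst p\<close> \<open>snd q < snd p\<close> by fastforce
  moreover have "path_image g \<inter> B = {}"
    using g(2) upside_subset[OF tame] by blast
  moreover have "({x0} \<times> {y0..Y}) \<inter> B = {}"
    using up upside_subset[OF tame] unfolding upward_halfline_eq by fastforce
  ultimately show "path_image h \<inter> B = {}"
    using parts by blast
qed

lemma point_below_not_in_upside:
  assumes tame: "tame_curve B" and "p \<in> B" and only_p: "\<forall>r\<in>B. fst r = fst p \<longrightarrow> r = p"
    and "fst q = fst p" and "snd q < snd p"
  shows "q \<notin> upside B"
proof
  assume "q \<in> upside B"
  then obtain g x0 y0 where g: "path g" "path_image g \<subseteq> upside B" "pathstart g = q"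
    "pathfinish g = (x0, y0)" and up: "upward_halfline x0 y0 \<subseteq> upside B"
    using upside_path_to_halfline[OF tame] by blast
  obtain K where K: "\<forall>z\<in>path_image g. \<bar>fst z\<bar> \<le> K \<and> \<bar>snd z\<bar> \<le> K"
    using path_image_coordinates_bounded[OF g(1)] by blast
  have "q \<in> path_image g" "(x0, y0) \<in> path_image g"
    using g(3,4) pathstart_in_path_image[of g] pathfinish_in_path_image[of g] by simp_all
  then have K_ends: "\<bar>fst q\<bar> \<le> K" "\<bar>snd q\<bar> \<le> K" "\<bar>x0\<bar> \<le> K" "\<bar>y0\<bar> \<le> K"
    using K by fastforce+
  define X where "X = K + 1"
  obtain R where R: "\<forall>r\<in>B. \<bar>fst r\<bar> \<le> X \<longrightarrow> \<bar>snd r\<bar> \<le> R"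
    using tame_curve_strip_bounded[OF tame] by blast
  define Y where "Y = max R K + 1"
  define h where "h = linepath (fst q, - Y) q +++ g +++ linepath (x0, y0) (x0, Y)"
  have "- Y \<le> snd q" "y0 \<le> Y"
    using K_ends unfolding Y_def by auto
  note h = vertically_extended_path_avoids[OF assms g up this, folded h_def]
  have "\<forall>z\<in>path_image h. \<bar>fst z\<bar> < X \<and> \<bar>snd z\<bar> \<le> Y"
  proof
    fix z assume "z \<in> path_image h"
    then consider "z \<in> {fst q} \<times> {- Y..snd q}" | "z \<in> path_image g" | "z \<in> {x0} \<times> {y0..Y}"
      using h(3) by blast
    then show "\<bar>fst z\<bar> < X \<and> \<bar>snd z\<bar> \<le> Y"
      by cases (use K K_ends in \<open>auto simp: X_def Y_def\<close>)
  qed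
  moreover have "snd (pathstart h) = - Y" "snd (pathfinish h) = Y"
    by (simp_all add: h_def)
  moreover obtain b1 b2 where "b1 \<in> B" "fst b1 = - X" "b2 \<in> B" "fst b2 = X"
    using tame unfolding tame_curve_def wide_def by meson
  moreover have "\<forall>r\<in>B. \<bar>fst r\<bar> \<le> X \<longrightarrow> \<bar>snd r\<bar> \<le> Y"
    using R unfolding Y_def by fastforce
  ultimately show False
    using path_meets_crossing_curve[of B b1 X b2 Y h] tame h(1,2)
    unfolding tame_curve_def by blast
qed

section \<open>Comparing tame curves\<close>

definition eventually_below :: "point set \<Rightarrow> point set \<Rightarrow> bool" where
  "eventually_below A B \<longleftrightarrow> (\<exists>M. \<forall>a\<in>A. \<forall>b\<in>B. fst a = fst b \<longrightarrow> M \<le> fst a \<longrightarrow> snd a < snd b)"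

lemma eventually_below_irrefl:
  assumes "wide A"
  shows "\<not> eventually_below A A"
proof
  assume "eventually_below A A"
  then obtain M where "\<forall>a\<in>A. \<forall>b\<in>A. fst a = fst b \<longrightarrow> M \<le> fst a \<longrightarrow> snd a < snd b"
    unfolding eventually_below_def by blast
  moreover obtain a where "a \<in> A" "fst a = M"
    using assms unfolding wide_def by blast
  ultimately show False
    by blast
qed

lemma eventually_below_trans:
  assumes "wide B" and "eventually_below A B" and "eventually_below B C"
  shows "eventually_below A C"
proof -
  obtain M1 M2 where
    M1: "\<forall>a\<in>A. \<forall>b\<in>B. fst a = fst b \<longrightarrow> M1 \<le> fst a \<longrightarrow> snd a < snd b" and
    M2: "\<forall>b\<in>B. \<forall>c\<in>C. fst b = fst c \<longrightarrow> M2 \<le> fst b \<longrightarrow> snd b < snd c"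
    using assms(2,3) unfolding eventually_below_def by blast
  have "snd a < snd c" if "a \<in> A" "c \<in> C" "fst a = fst c" "max M1 M2 \<le> fst a" for a c
  proof -
    obtain b where "b \<in> B" "fst b = fst a"
      using assms(1) unfolding wide_def by blast
    then show ?thesis
      using M1 M2 that by fastforce
  qed
  then show ?thesis
    unfolding eventually_below_def by blast
qed

lemma higher_imp_eventually_below:
  assumes tame: "tame_curve A" and "higher A B"
  shows "eventually_below A B"
proof -
  obtain M where M: "\<forall>p\<in>A. \<forall>q\<in>A. fst p = fst q \<longrightarrow> M \<le> fst p \<longrightarrow> p = q"
    using tame unfolding tame_curve_def by blast
  have "snd a < snd b" if "a \<in> A" "b \<in> B" "fst a = fst b" "M \<le> fst a" for a b
  proof -
    have "b \<in> upside A"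
      using \<open>higher A B\<close> \<open>b \<in> B\<close> unfolding higher_def by blast
    have only_a: "\<forall>r\<in>A. fst r = fst a \<longrightarrow> r = a"
      using M that by auto
    have "\<not> snd b < snd a"
      using point_below_not_in_upside[OF tame \<open>a \<in> A\<close> only_a \<open>fst a = fst b\<close>[symmetric]]
        \<open>b \<in> upside A\<close> by blast
    moreover have "b \<noteq> a"
      using \<open>b \<in> upside A\<close> upside_subset[OF tame] \<open>a \<in> A\<close> by blast
    then have "snd b \<noteq> snd a"
      using \<open>fst a = fst b\<close> by (auto simp: prod_eq_iff)
    ultimately show ?thesis
      by linarith
  qed
  then show ?thesis
    unfolding eventually_below_def by blast
qed

lemma tame_curve_connected: "tame_curve B \<Longrightarrow> connected B"
  unfolding tame_curve_def using path_connected_imp_connected by blast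

lemma higher_if_meets_upside:
  assumes "tame_curve A" and "connected B" and "A \<inter> B = {}" and "b \<in> B" and "b \<in> upside A"
  shows "higher A B"
proof -
  have "B \<subseteq> - A" "upside A \<inter> B \<noteq> {}"
    using assms(3-5) by blast+
  then show ?thesis
    unfolding higher_def by (rule components_maximal[OF upside_in_components(1)[OF assms(1)] assms(2)])
qed

lemma higher_or_higher_if_disjoint:
  assumes tame_A: "tame_curve A" and tame_B: "tame_curve B" and "A \<inter> B = {}"
  shows "higher A B \<or> higher B A"
proof -
  obtain MA where MA: "\<forall>p\<in>A. \<forall>q\<in>A. fst p = fst q \<longrightarrow> MA \<le> fst p \<longrightarrow> p = q"
    using tame_A unfolding tame_curve_def by blast
  obtain MB where MB: "\<forall>p\<in>B. \<forall>q\<in>B. fst p = fst q \<longrightarrow> MB \<le> fst p \<longrightarrow> p = q"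
    using tame_B unfolding tame_curve_def by blast
  obtain a where a: "a \<in> A" "fst a = max MA MB"
    using tame_A unfolding tame_curve_def wide_def by blast
  obtain b where b: "b \<in> B" "fst b = max MA MB"
    using tame_B unfolding tame_curve_def wide_def by blast
  have only_a: "\<forall>r\<in>A. fst r = fst a \<longrightarrow> r = a" and only_b: "\<forall>r\<in>B. fst r = fst b \<longrightarrow> r = b"
    using MA MB a b by auto
  have "a \<noteq> b"
    using a b \<open>A \<inter> B = {}\<close> by blast
  then have "snd a \<noteq> snd b"
    using a b by (auto simp: prod_eq_iff)
  then consider "snd a < snd b" | "snd b < snd a"
    by linarith
  then show ?thesis
  proof cases
    case 1
    then have "b \<in> upside A"
      using point_above_in_upside[OF tame_A \<open>a \<in> A\<close> only_a] a b by simp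
    then show ?thesis
      using higher_if_meets_upside[OF tame_A tame_curve_connected[OF tame_B] \<open>A \<inter> B = {}\<close> \<open>b \<in> B\<close>]
      by blast
  next
    case 2
    then have "a \<in> upside B"
      using point_above_in_upside[OF tame_B \<open>b \<in> B\<close> only_b] a b by simp
    then show ?thesis
      using higher_if_meets_upside[OF tame_B tame_curve_connected[OF tame_A] _ \<open>a \<in> A\<close>] \<open>A \<inter> B = {}\<close>
      by blast
  qed
qed

lemma higher_disjoint: "tame_curve A \<Longrightarrow> higher A B \<Longrightarrow> A \<inter> B = {}"
  using upside_subset unfolding higher_def by blast

lemma higher_or_higher_iff_disjoint:
  assumes "tame_curve A" and "tame_curve B"
  shows "higher A B \<or> higher B A \<longleftrightarrow> A \<inter> B = {}"
  using higher_or_higher_if_disjoint[OF assms] higher_disjoint[OF assms(1), of B]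
    higher_disjoint[OF assms(2), of A] by auto

lemma higher_irrefl: "tame_curve A \<Longrightarrow> \<not> higher A A"
  using higher_imp_eventually_below eventually_below_irrefl unfolding tame_curve_def by blast

lemma higher_trans:
  assumes tame: "tame_curve A" "tame_curve B" "tame_curve C"
    and "higher A B" and "higher B C"
  shows "higher A C"
proof -
  have wide: "wide A" "wide B" "wide C"
    using tame unfolding tame_curve_def by blast+
  have above: "eventually_below A B" "eventually_below B C"
    using higher_imp_eventually_below tame assms(4,5) by blast+
  have "A \<inter> C = {}"
  proof (rule ccontr)
    assume "A \<inter> C \<noteq> {}"
    then obtain a where "a \<in> A" "a \<in> upside B"
      using \<open>higher B C\<close> unfolding higher_def by blast
    then have "higher B A"
      using higher_if_meets_upside[OF tame(2) tame_curve_connected[OF tame(1)] _ \<open>a \<in> A\<close>]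
        higher_disjoint[OF tame(1) \<open>higher A B\<close>] by blast
    then show False
      using eventually_below_trans[OF wide(1) higher_imp_eventually_below[OF tame(2)] above(1)]
        eventually_below_irrefl[OF wide(2)] by blast
  qed
  moreover have "\<not> higher C A"
    using higher_imp_eventually_below[OF tame(3)] eventually_below_trans[OF wide(3)]
      eventually_below_trans[OF wide(2) above] eventually_below_irrefl[OF wide(1)] by blast
  ultimately show ?thesis
    using higher_or_higher_if_disjoint[OF tame(1,3)] by blast
qed

section \<open>Colouring comparability graphs\<close>

lemma card_le_clique_number:
  assumes "finite V" and "C \<subseteq> V" and "\<forall>u\<in>C. \<forall>v\<in>C. u \<noteq> v \<longrightarrow> E u v"
  shows "card C \<le> clique_number V E"
proof -
  have "{card C | C. C \<subseteq> V \<and> (\<forall>u\<in>C. \<forall>v\<in>C. u \<noteq> v \<longrightarrow> E u v)} \<subseteq> {..card V}"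
    using assms(1) by (auto intro: card_mono)
  then have "finite {card C | C. C \<subseteq> V \<and> (\<forall>u\<in>C. \<forall>v\<in>C. u \<noteq> v \<longrightarrow> E u v)}"
    using finite_subset by blast
  then show ?thesis
    unfolding clique_number_def using assms(2,3) by (auto intro: Max_ge)
qed

lemma clique_number_attained:
  assumes "finite V"
  obtains C where "C \<subseteq> V" "\<forall>u\<in>C. \<forall>v\<in>C. u \<noteq> v \<longrightarrow> E u v" "card C = clique_number V E"
proof -
  let ?K = "{card C | C. C \<subseteq> V \<and> (\<forall>u\<in>C. \<forall>v\<in>C. u \<noteq> v \<longrightarrow> E u v)}"
  have "?K \<subseteq> {..card V}"
    using assms by (auto intro: card_mono)
  then have "finite ?K"
    using finite_subset by blast
  moreover have "?K \<noteq> {}"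
    by auto
  ultimately have "clique_number V E \<in> ?K"
    unfolding clique_number_def by (rule Max_in)
  then show ?thesis
    using that by auto
qed

lemma card_clique_le_colours:
  assumes "finite V" and colour: "\<forall>v\<in>V. c v < n" "\<forall>u\<in>V. \<forall>v\<in>V. E u v \<longrightarrow> c u \<noteq> c v"
    and clique: "C \<subseteq> V" "\<forall>u\<in>C. \<forall>v\<in>C. u \<noteq> v \<longrightarrow> E u v"
  shows "card C \<le> n"
proof -
  have "inj_on c C"
  proof (rule inj_onI, rule ccontr)
    fix u v assume "u \<in> C" "v \<in> C" "c u = c v" "u \<noteq> v"
    then have "E u v" "u \<in> V" "v \<in> V"
      using clique by auto
    then show False
      using colour(2) \<open>c u = c v\<close> by simp
  qed
  moreover have "c ` C \<subseteq> {..<n}"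
    using colour(1) clique(1) by auto
  ultimately show ?thesis
    using card_inj_on_le[of c C "{..<n}"] by simp
qed

definition top_cliques :: "'a set \<Rightarrow> ('a \<Rightarrow> 'a \<Rightarrow> bool) \<Rightarrow> ('a \<Rightarrow> 'a \<Rightarrow> bool) \<Rightarrow> 'a \<Rightarrow> 'a set set"
  where "top_cliques V E R v = {C. C \<subseteq> V \<and> v \<in> C \<and> (\<forall>w\<in>C. w \<noteq> v \<longrightarrow> R w v)
      \<and> (\<forall>a\<in>C. \<forall>b\<in>C. a \<noteq> b \<longrightarrow> E a b)}"

definition clique_height :: "'a set \<Rightarrow> ('a \<Rightarrow> 'a \<Rightarrow> bool) \<Rightarrow> ('a \<Rightarrow> 'a \<Rightarrow> bool) \<Rightarrow> 'a \<Rightarrow> nat"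
  where "clique_height V E R v = Max (card ` top_cliques V E R v)"

lemma finite_card_top_cliques:
  assumes "finite V"
  shows "finite (card ` top_cliques V E R v)"
proof -
  have "top_cliques V E R v \<subseteq> Pow V"
    unfolding top_cliques_def by auto
  then have "finite (top_cliques V E R v)"
    by (rule finite_subset) (simp add: assms)
  then show ?thesis
    by simp
qed

lemma card_le_clique_height:
  "finite V \<Longrightarrow> C \<in> top_cliques V E R v \<Longrightarrow> card C \<le> clique_height V E R v"
  unfolding clique_height_def by (rule Max_ge[OF finite_card_top_cliques]) simp_all

lemma singleton_in_top_cliques: "v \<in> V \<Longrightarrow> {v} \<in> top_cliques V E R v"
  unfolding top_cliques_def by simp

lemma clique_height_attained:
  assumes "finite V" and "v \<in> V"
  obtains C where "C \<in> top_cliques V E R v" "card C = clique_height V E R v"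
proof -
  have "clique_height V E R v \<in> card ` top_cliques V E R v"
    unfolding clique_height_def using singleton_in_top_cliques[OF assms(2)]
    by (intro Max_in[OF finite_card_top_cliques[OF assms(1)]]) auto
  then obtain C where "C \<in> top_cliques V E R v" "clique_height V E R v = card C"
    by (rule imageE)
  then show ?thesis
    using that[of C] by simp
qed

lemma clique_height_bounds:
  assumes "finite V" and "v \<in> V"
  shows "1 \<le> clique_height V E R v" and "clique_height V E R v \<le> clique_number V E"
proof -
  show "1 \<le> clique_height V E R v"
    using card_le_clique_height[OF assms(1) singleton_in_top_cliques[OF assms(2)]] by simp
  obtain C where "C \<in> top_cliques V E R v" "card C = clique_height V E R v"
    using clique_height_attained[OF assms] .
  then show "clique_height V E R v \<le> clique_number V E"
    using card_le_clique_number[OF assms(1), of C E] unfolding top_cliques_def by auto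
qed

lemma clique_height_less:
  assumes "finite V" and irrefl: "\<forall>a\<in>V. \<not> R a a"
    and trans: "\<forall>a\<in>V. \<forall>b\<in>V. \<forall>c\<in>V. R a b \<and> R b c \<longrightarrow> R a c"
    and edges: "\<forall>a\<in>V. \<forall>b\<in>V. a \<noteq> b \<longrightarrow> (E a b \<longleftrightarrow> R a b \<or> R b a)"
    and "u \<in> V" "v \<in> V" "R u v"
  shows "clique_height V E R u < clique_height V E R v"
proof -
  obtain C where C: "C \<in> top_cliques V E R u" "card C = clique_height V E R u"
    using clique_height_attained[OF \<open>finite V\<close> \<open>u \<in> V\<close>] by blast
  then have "C \<subseteq> V" and below_u: "\<forall>w\<in>C. w \<noteq> u \<longrightarrow> R w u"
    unfolding top_cliques_def by simp_all
  have below_v: "R w v" if "w \<in> C" for w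
  proof (cases "w = u")
    case False
    then have "R w u"
      using below_u that by blast
    then show ?thesis
      using trans \<open>R u v\<close> \<open>u \<in> V\<close> \<open>v \<in> V\<close> \<open>w \<in> C\<close> \<open>C \<subseteq> V\<close> by blast
  qed (use \<open>R u v\<close> in simp)
  then have "v \<notin> C"
    using irrefl \<open>v \<in> V\<close> by blast
  have "E w v \<and> E v w" if "w \<in> C" for w
  proof -
    have "w \<in> V" "w \<noteq> v"
      using that \<open>C \<subseteq> V\<close> \<open>v \<notin> C\<close> by auto
    then show ?thesis
      using edges[rule_format, OF \<open>w \<in> V\<close> \<open>v \<in> V\<close>] edges[rule_format, OF \<open>v \<in> V\<close> \<open>w \<in> V\<close>]
        below_v[OF that] by auto
  qed
  then have "insert v C \<in> top_cliques V E R v"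
    using C(1) below_v \<open>v \<in> V\<close> unfolding top_cliques_def by auto
  moreover have "finite C"
    using \<open>C \<subseteq> V\<close> \<open>finite V\<close> by (rule finite_subset)
  then have "card (insert v C) = clique_height V E R u + 1"
    using C(2) \<open>v \<notin> C\<close> by simp
  ultimately show ?thesis
    using card_le_clique_height[OF \<open>finite V\<close>, of "insert v C" E R v] by linarith
qed

lemma comparability_graph_colouring:
  assumes "finite V" and "comparability_graph V E" and irrefl_E: "\<forall>v\<in>V. \<not> E v v"
  obtains c where "\<forall>v\<in>V. c v < clique_number V E" "\<forall>u\<in>V. \<forall>v\<in>V. E u v \<longrightarrow> c u \<noteq> c v"
proof -
  obtain R where irrefl: "\<forall>a\<in>V. \<not> R a a" and trans: "\<forall>a\<in>V. \<forall>b\<in>V. \<forall>c\<in>V. R a b \<and> R b c \<longrightarrow> R a c"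
    and edges: "\<forall>a\<in>V. \<forall>b\<in>V. a \<noteq> b \<longrightarrow> (E a b \<longleftrightarrow> R a b \<or> R b a)"
    using assms(2) unfolding comparability_graph_def by (elim exE conjE) (rule that)
  note height_bounds = clique_height_bounds[OF \<open>finite V\<close>, of _ E R]
  have "clique_height V E R v - 1 < clique_number V E" if "v \<in> V" for v
    using height_bounds[OF that] by arith
  moreover have "clique_height V E R u - 1 \<noteq> clique_height V E R v - 1"
    if "u \<in> V" "v \<in> V" "E u v" for u v
  proof -
    have "u \<noteq> v"
      using irrefl_E that by blast
    then have "R u v \<or> R v u"
      using edges[rule_format, OF that(1,2)] that(3) by blast
    then have "clique_height V E R u \<noteq> clique_height V E R v"
      using clique_height_less[OF \<open>finite V\<close> irrefl trans edges] that(1,2) by fastforce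
    then show ?thesis
      using height_bounds[OF that(1)] height_bounds[OF that(2)] by arith
  qed
  ultimately show ?thesis
    using that[of "\<lambda>v. clique_height V E R v - 1"] by blast
qed

lemma chromatic_number_eq_clique_number:
  assumes "finite V" and "comparability_graph V E" and "\<forall>v\<in>V. \<not> E v v"
  shows "chromatic_number V E = clique_number V E"
proof -
  let ?colourable = "\<lambda>n. \<exists>c::'a \<Rightarrow> nat. (\<forall>v\<in>V. c v < n) \<and> (\<forall>u\<in>V. \<forall>v\<in>V. E u v \<longrightarrow> c u \<noteq> c v)"
  obtain c where "\<forall>v\<in>V. c v < clique_number V E" "\<forall>u\<in>V. \<forall>v\<in>V. E u v \<longrightarrow> c u \<noteq> c v"
    using comparability_graph_colouring[OF assms] .
  then have colourable: "?colourable (clique_number V E)"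
    by (intro exI[of _ c] conjI)
  then have "chromatic_number V E \<le> clique_number V E"
    unfolding chromatic_number_def by (rule Least_le)
  moreover have "clique_number V E \<le> chromatic_number V E"
  proof -
    have "?colourable (chromatic_number V E)"
      unfolding chromatic_number_def using colourable by (rule LeastI)
    then obtain c' :: "'a \<Rightarrow> nat" where c': "\<forall>v\<in>V. c' v < chromatic_number V E"
      "\<forall>u\<in>V. \<forall>v\<in>V. E u v \<longrightarrow> c' u \<noteq> c' v"
      by (elim exE conjE) (rule that)
    obtain C where C: "C \<subseteq> V" "\<forall>u\<in>C. \<forall>v\<in>C. u \<noteq> v \<longrightarrow> E u v" and "card C = clique_number V E"
      using clique_number_attained[OF assms(1)] .
    then show ?thesis
      using card_clique_le_colours[OF assms(1) c' C] by simp
  qed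
  ultimately show ?thesis
    by (rule antisym)
qed

theorem mainTheorem9:
  fixes k :: nat and F :: "point set set"
  assumes "k \<ge> 1" and "finite F"
    and "\<forall>A\<in>F. k_monotone_chain k A \<and> wide A"
  shows "(\<forall>A\<in>F. \<not> higher A A)
       \<and> (\<forall>A\<in>F. \<forall>B\<in>F. \<forall>C\<in>F. higher A B \<and> higher B C \<longrightarrow> higher A C)
       \<and> (\<forall>A\<in>F. \<forall>B\<in>F. A \<noteq> B \<longrightarrow> ((higher A B \<or> higher B A) \<longleftrightarrow> A \<inter> B = {}))
       \<and> comparability_graph F (disj_edge F)
       \<and> chromatic_number F (disj_edge F) = clique_number F (disj_edge F)"
proof -
  have tame: "tame_curve A" if "A \<in> F" for A
    using tame_curve_if_wide_chain[OF assms(1)] assms(3) that by simp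
  have irrefl: "\<forall>A\<in>F. \<not> higher A A"
    using higher_irrefl tame by simp
  have trans: "\<forall>A\<in>F. \<forall>B\<in>F. \<forall>C\<in>F. higher A B \<and> higher B C \<longrightarrow> higher A C"
    using higher_trans[OF tame tame tame] by (intro ballI impI) (elim conjE)
  have comparable: "\<forall>A\<in>F. \<forall>B\<in>F. A \<noteq> B \<longrightarrow> ((higher A B \<or> higher B A) \<longleftrightarrow> A \<inter> B = {})"
    using higher_or_higher_iff_disjoint[OF tame tame] by simp
  have comparability: "comparability_graph F (disj_edge F)"
    unfolding comparability_graph_def disj_edge_def
    by (intro exI[of _ higher] conjI irrefl trans) (use comparable in auto)
  have "chromatic_number F (disj_edge F) = clique_number F (disj_edge F)"
    by (rule chromatic_number_eq_clique_number[OF assms(2) comparability]) (simp add: disj_edge_def)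
  with irrefl trans comparable comparability show ?thesis
    by (intro conjI)
qed

end
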